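(* Let $p\in\mathcal P$ be such that $\mu(p^r)\le\mu(p)$. Then: (i) $D_{\mu(p)}(p)\cap D_{\mu(p^r)}(p^r)\subseteq\mathrm I(\Gamma_{\mu(p)}(p))$; in particular, if $\Gamma_{\mu(p)}(p)$ is connected, then $D_{\mu(p)}(p)\cap D_{\mu(p^r)}(p^r)=\varnothing$. (ii) If $|D_{\mu(p)}(p)|=1$ and $\Gamma_{\mu(p)}(p)$ is acyclic, then $D_{\mu(p)}(p)\cap D_{\mu(p^r)}(p^r)=\varnothing$.
   Context: Let $n,h\ge2$, $N=\{1,\dots,n\}$, $H=\{1,\dots,h\}$, $\mathcal P$ the set of $h$-tuples of linear orders on $N$, $p^r$ the profile obtained by reversing each order; $x>_{p_i}y$ means $x\neq y$ and $p_i$ ranks $x$ above $y$; for an integer $\mu\in(h/2,h]$, $x>^p_\mu y$ means $|\{i: x>_{p_i}y\}|\ge\mu$; $D_\mu(p)=\{x\in N: \forall y,\ |\{i: y>_{p_i}x\}|<\mu\}$; $\mu(p)=\min\{\mu\in\mathbb N\cap(h/2,h]: D_\mu(p)\ne\varnothing\}$. $\Gamma_\mu(p)$ is the directed graph $(N,\{(x,y): x>^p_\mu y\})$. For a directed graph, $\mathrm I$ is the set of isolated vertices (no arc in or out); connected means the underlying undirected graph is connected; acyclic means it contains no directed cycle (on $l\ge2$ distinct vertices) as a subgraph. *)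

theory Defs
  imports Main
begin

text \<open>A profile is a map from voter indices to relations on nat; voter i (for i in {1..h})
  has the linear order p i on {1..n}, where (x,y) in p i means that voter i ranks x
  weakly above y.\<close>

definition profile :: "nat \<Rightarrow> nat \<Rightarrow> (nat \<Rightarrow> nat rel) \<Rightarrow> bool" where
  "profile n h p \<longleftrightarrow> (\<forall>i\<in>{1..h}. linear_order_on {1..n} (p i))"

definition rev_prof :: "(nat \<Rightarrow> nat rel) \<Rightarrow> (nat \<Rightarrow> nat rel)" where
  "rev_prof p = (\<lambda>i. (p i)\<inverse>)"

definition prefers :: "(nat \<Rightarrow> nat rel) \<Rightarrow> nat \<Rightarrow> nat \<Rightarrow> nat \<Rightarrow> bool" where
  "prefers p i x y \<longleftrightarrow> x \<noteq> y \<and> (x, y) \<in> p i"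

definition cnt :: "nat \<Rightarrow> (nat \<Rightarrow> nat rel) \<Rightarrow> nat \<Rightarrow> nat \<Rightarrow> nat" where
  "cnt h p x y = card {i \<in> {1..h}. prefers p i x y}"

definition maj :: "nat \<Rightarrow> (nat \<Rightarrow> nat rel) \<Rightarrow> nat \<Rightarrow> nat \<Rightarrow> nat \<Rightarrow> bool" where
  "maj h p \<mu> x y \<longleftrightarrow> cnt h p x y \<ge> \<mu>"

definition Dset :: "nat \<Rightarrow> nat \<Rightarrow> nat \<Rightarrow> (nat \<Rightarrow> nat rel) \<Rightarrow> nat set" where
  "Dset n h \<mu> p = {x \<in> {1..n}. \<forall>y\<in>{1..n}. cnt h p y x < \<mu>}"

definition mu :: "nat \<Rightarrow> nat \<Rightarrow> (nat \<Rightarrow> nat rel) \<Rightarrow> nat" where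
  "mu n h p = (LEAST \<mu>. h < 2 * \<mu> \<and> \<mu> \<le> h \<and> Dset n h \<mu> p \<noteq> {})"

text \<open>Arc set of the directed graph Gamma_mu(p), whose vertex set is {1..n}.\<close>
definition Gamma :: "nat \<Rightarrow> nat \<Rightarrow> nat \<Rightarrow> (nat \<Rightarrow> nat rel) \<Rightarrow> nat rel" where
  "Gamma n h \<mu> p = {(x, y). x \<in> {1..n} \<and> y \<in> {1..n} \<and> maj h p \<mu> x y}"

definition isolated :: "'a set \<Rightarrow> 'a rel \<Rightarrow> 'a set" where
  "isolated V E = {x \<in> V. \<forall>y. (x, y) \<notin> E \<and> (y, x) \<notin> E}"

definition dconnected :: "'a set \<Rightarrow> 'a rel \<Rightarrow> bool" where
  "dconnected V E \<longleftrightarrow> (\<forall>x\<in>V. \<forall>y\<in>V. (x, y) \<in> (E \<union> E\<inverse>)\<^sup>*)"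

definition dacyclic :: "'a set \<Rightarrow> 'a rel \<Rightarrow> bool" where
  "dacyclic V E \<longleftrightarrow> \<not> (\<exists>xs. length xs \<ge> 2 \<and> distinct xs \<and> set xs \<subseteq> V \<and>
      (\<forall>k < length xs - 1. (xs ! k, xs ! Suc k) \<in> E) \<and> (last xs, hd xs) \<in> E)"

end

theory Submission
  imports Defs "HOL-Library.Transitive_Closure_Table"
begin

text \<open>A candidate x in both sets is beaten by no y with \<mu>(p) votes and beats no y with
  \<mu>(p^r) \<le> \<mu>(p) votes, so x is isolated in \<Gamma>_\<mu>(p)(p); connectedness then leaves no room for x
  since n \<ge> 2. For (ii), the acyclic finite graph restricted to the vertices other than the
  isolated x has a source z; z has no in-arc at all, hence lies in D_\<mu>(p)(p) next to x.\<close>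

lemma cnt_rev_prof: "cnt h (rev_prof p) y x = cnt h p x y"
  unfolding cnt_def prefers_def rev_prof_def by (rule arg_cong[where f = card]) auto

lemma Gamma_subset: "Gamma n h \<mu> p \<subseteq> {1..n} \<times> {1..n}"
  unfolding Gamma_def by auto

lemma Gamma_irrefl: "0 < \<mu> \<Longrightarrow> (x, x) \<notin> Gamma n h \<mu> p"
  unfolding Gamma_def maj_def cnt_def prefers_def by simp

lemma Dset_inter_Dset_rev_subset_isolated:
  assumes "\<nu> \<le> \<mu>"
  shows "Dset n h \<mu> p \<inter> Dset n h \<nu> (rev_prof p) \<subseteq> isolated {1..n} (Gamma n h \<mu> p)"
proof
  fix x assume "x \<in> Dset n h \<mu> p \<inter> Dset n h \<nu> (rev_prof p)"
  then have x: "x \<in> {1..n}" and in_arcs: "\<forall>y\<in>{1..n}. cnt h p y x < \<mu>"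
    and out_arcs: "\<forall>y\<in>{1..n}. cnt h p x y < \<nu>"
    unfolding Dset_def by (simp_all add: cnt_rev_prof)
  show "x \<in> isolated {1..n} (Gamma n h \<mu> p)"
    using x in_arcs out_arcs assms unfolding isolated_def Gamma_def maj_def by fastforce
qed

lemma exists_other_in_atLeastAtMost:
  assumes "2 \<le> n" "x \<in> {1..n}"
  obtains y :: nat where "y \<in> {1..n}" "y \<noteq> x"
proof (cases "x = 1")
  case True with assms that[of 2] show ?thesis by auto
next
  case False with assms that[of 1] show ?thesis by auto
qed

lemma dconnected_not_isolated:
  assumes "dconnected V E" "x \<in> V" "y \<in> V" "x \<noteq> y"
  shows "x \<notin> isolated V E"
proof
  assume isolated: "x \<in> isolated V E"
  have "(x, y) \<in> (E \<union> E\<inverse>)\<^sup>*" using assms unfolding dconnected_def by blast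
  with \<open>x \<noteq> y\<close> obtain z where "(x, z) \<in> E \<union> E\<inverse>" by (metis converse_rtranclE)
  with isolated show False unfolding isolated_def by auto
qed

text \<open>A closed walk v \<rightarrow> w \<rightarrow> ... \<rightarrow> v yields a cycle in the sense of dacyclic once the
  path from w to v is made duplicate-free; irreflexivity rules out cycles of length one.\<close>

lemma dacyclic_imp_acyclic:
  assumes E: "E \<subseteq> V \<times> V" and irrefl: "\<And>v. (v, v) \<notin> E" and "dacyclic V E"
  shows "acyclic E"
  unfolding acyclic_def
proof (intro allI notI)
  fix v assume "(v, v) \<in> E\<^sup>+"
  then obtain w where vw: "(v, w) \<in> E" and "(w, v) \<in> E\<^sup>*" by (meson tranclD)
  then have "(\<lambda>a b. (a, b) \<in> E)\<^sup>*\<^sup>* w v" by (simp add: rtranclp_rtrancl_eq)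
  then obtain ys where "rtrancl_path (\<lambda>a b. (a, b) \<in> E) w ys v"
    by (auto simp: rtranclp_eq_rtrancl_path)
  then obtain zs where path: "rtrancl_path (\<lambda>a b. (a, b) \<in> E) w zs v"
    and distinct: "distinct (w # zs)" by (rule rtrancl_path_distinct)
  have "w \<noteq> v" using vw irrefl by blast
  then have "zs \<noteq> []" using path by (auto elim: rtrancl_path.cases)
  define xs where "xs = w # zs"
  have "length xs \<ge> 2" using \<open>zs \<noteq> []\<close> by (cases zs) (simp_all add: xs_def)
  moreover have "set xs \<subseteq> V"
    using vw E rtrancl_path_Range[OF path] by (fastforce simp: xs_def)
  moreover have "\<forall>k < length xs - 1. (xs ! k, xs ! Suc k) \<in> E"
    using rtrancl_path_nth[OF path] by (simp add: xs_def)
  moreover have "(last xs, hd xs) \<in> E"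
    using vw rtrancl_path_last[OF path \<open>zs \<noteq> []\<close>] \<open>zs \<noteq> []\<close> by (simp add: xs_def)
  ultimately show False
    using \<open>dacyclic V E\<close> distinct unfolding dacyclic_def xs_def by blast
qed

lemma isolated_Dset_has_companion:
  assumes "2 \<le> n" and acyclic: "dacyclic {1..n} (Gamma n h \<mu> p)"
    and xD: "x \<in> Dset n h \<mu> p" and isolated: "x \<in> isolated {1..n} (Gamma n h \<mu> p)"
  obtains z where "z \<in> Dset n h \<mu> p" "z \<noteq> x"
proof -
  let ?G = "Gamma n h \<mu> p"
  have x: "x \<in> {1..n}" using xD unfolding Dset_def by blast
  then have "0 < \<mu>" using xD unfolding Dset_def by fastforce
  have "finite ?G" using Gamma_subset by (rule finite_subset) simp
  moreover from \<open>0 < \<mu>\<close> have "acyclic ?G"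
    using dacyclic_imp_acyclic[OF Gamma_subset Gamma_irrefl acyclic] by blast
  ultimately have "wf ?G" by (rule finite_acyclic_wf)
  obtain y where "y \<in> {1..n} - {x}" using exists_other_in_atLeastAtMost[OF \<open>2 \<le> n\<close> x] by blast
  with \<open>wf ?G\<close> obtain z where z: "z \<in> {1..n} - {x}"
    and source: "\<forall>w. (w, z) \<in> ?G \<longrightarrow> w \<notin> {1..n} - {x}"
    unfolding wf_eq_minimal by meson
  have "cnt h p w z < \<mu>" if w: "w \<in> {1..n}" for w
  proof (rule ccontr)
    assume "\<not> cnt h p w z < \<mu>"
    with w z have wz: "(w, z) \<in> ?G" unfolding Gamma_def maj_def by auto
    with w source have "w = x" by blast
    with wz isolated show False unfolding isolated_def by blast
  qed
  with z have "z \<in> Dset n h \<mu> p" unfolding Dset_def by blast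
  with z that show ?thesis by blast
qed

theorem lemma5:
  fixes n h :: nat and p :: "nat \<Rightarrow> nat rel"
  assumes "n \<ge> 2" and "h \<ge> 2" and "profile n h p"
    and "mu n h (rev_prof p) \<le> mu n h p"
  shows "Dset n h (mu n h p) p \<inter> Dset n h (mu n h (rev_prof p)) (rev_prof p)
           \<subseteq> isolated {1..n} (Gamma n h (mu n h p) p)
       \<and> (dconnected {1..n} (Gamma n h (mu n h p) p) \<longrightarrow>
           Dset n h (mu n h p) p \<inter> Dset n h (mu n h (rev_prof p)) (rev_prof p) = {})
       \<and> (card (Dset n h (mu n h p) p) = 1 \<and> dacyclic {1..n} (Gamma n h (mu n h p) p) \<longrightarrow>
           Dset n h (mu n h p) p \<inter> Dset n h (mu n h (rev_prof p)) (rev_prof p) = {})"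
proof -
  let ?D = "Dset n h (mu n h p) p" and ?G = "Gamma n h (mu n h p) p"
  let ?I = "?D \<inter> Dset n h (mu n h (rev_prof p)) (rev_prof p)"
  have isolated: "?I \<subseteq> isolated {1..n} ?G"
    using Dset_inter_Dset_rev_subset_isolated[OF assms(4)] .
  have connected: "?I = {}" if "dconnected {1..n} ?G"
  proof (rule equals0I)
    fix x assume "x \<in> ?I"
    with isolated have "x \<in> isolated {1..n} ?G" by (rule subsetD)
    moreover from this have x: "x \<in> {1..n}" unfolding isolated_def by simp
    moreover obtain y where "y \<in> {1..n}" "y \<noteq> x"
      using exists_other_in_atLeastAtMost[OF assms(1) x] .
    ultimately show False using dconnected_not_isolated[OF that] by metis
  qed
  have acyclic: "?I = {}" if card: "card ?D = 1" and acyclic: "dacyclic {1..n} ?G"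
  proof (rule equals0I)
    fix x assume "x \<in> ?I"
    then have "x \<in> ?D" and "x \<in> isolated {1..n} ?G" using isolated by auto
    then obtain z where "z \<in> ?D" "z \<noteq> x"
      using isolated_Dset_has_companion[OF assms(1) acyclic] by metis
    with \<open>x \<in> ?D\<close> card show False by (metis card_1_singletonE singletonD)
  qed
  show ?thesis using isolated connected acyclic by (intro conjI impI) auto
qed

end
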